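(* Let $D_1, D_2, D_3$ be pairwise disjoint finite sets with $|D_1|=|D_2|=|D_3|=n$, and let $S=\{p_1,\dots,p_d\}$ be a set of $d \ge n$ distinct points of $D_1\times D_2\times D_3$. Let $m$ be an integer with $3 \le m \le 3n$. Construct the table $\mathcal{T}$ described in the context. Then there exists $S' \subseteq S$ with $|S'|=n$ such that no two points of $S'$ share a coordinate on any dimension (i.e., 3-dimensional matching on $S$ answers ``yes'') if and only if there is a $3$-diverse generalization of $\mathcal{T}$ with exactly $3n(d-1)$ stars.
   Context: Generalization and diversity: a microdata table is a multiset of tuples over categorical quasi-identifier (QI) attributes $A_1,\dots,A_d$ and a sensitive attribute (SA) $B$. A set $S$ of tuples is $l$-eligible if at most $|S|/l$ of its tuples share any identical SA value. A partition of the table into QI-groups defines a generalization: in each group, an attribute $A_i$ keeps its value if all tuples of the group agree on it, otherwise every tuple's $A_i$ value in that group is replaced by a star; SA values are kept. The generalization is $l$-diverse if every QI-group is $l$-eligible. Construction of $\mathcal{T}$: enumerate $D_1=\{v_1,\dots,v_n\}$, $D_2=\{v_{n+1},\dots,v_{2n}\}$, $D_3=\{v_{2n+1},\dots,v_{3n}\}$. For $j \in [1,3n]$ define an integer $u_j$: $u_j=j$ if $j \le m-2$; for $j \ge m-1$: if $m-1>2n$, $u_j=m-1$ for $j\in[m-1,3n-1]$ and $u_{3n}=m$; if $2n \ge m-1 > n$, $u_j=m-1$ for $j \in [m-1,2n]$ and $u_j=m$ for $j\in[2n+1,3n]$; if $n \ge m-1$, $u_j=m-2$ for $j\in[m-1,n]$,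 $u_j=m-1$ for $j\in[n+1,2n]$, $u_j=m$ for $j \in [2n+1,3n]$. The table $\mathcal{T}$ has QI attributes $A_1,\dots,A_d$ (with $A_i$ corresponding to $p_i$), SA $B$, and $3n$ rows $t_1,\dots,t_{3n}$, where $t_j[B]=u_j$ and, for each $i\in[1,d]$, $t_j[A_i]=0$ if $v_j$ is a coordinate of $p_i$, and $t_j[A_i]=u_j$ otherwise. *)

theory Defs
  imports Main "HOL-Library.Disjoint_Sets"
begin

text \<open>The SA value u_j of row j (rows indexed 1..3n) in the construction of table T.\<close>
definition u_val :: "nat \<Rightarrow> nat \<Rightarrow> nat \<Rightarrow> nat" where
  "u_val n m j =
     (if j \<le> m - 2 then j
      else if m - 1 > 2 * n then (if j \<le> 3 * n - 1 then m - 1 else m)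
      else if m - 1 > n then (if j \<le> 2 * n then m - 1 else m)
      else (if j \<le> n then m - 2 else if j \<le> 2 * n then m - 1 else m))"

definition is_coord :: "'a \<Rightarrow> 'a \<times> 'a \<times> 'a \<Rightarrow> bool" where
  "is_coord x p = (x = fst p \<or> x = fst (snd p) \<or> x = snd (snd p))"

text \<open>QI value t_j[A_i] of table T, given the enumeration v of D1 u D2 u D3 and p of S.\<close>
definition T_qi :: "nat \<Rightarrow> nat \<Rightarrow> (nat \<Rightarrow> 'a) \<Rightarrow> (nat \<Rightarrow> 'a \<times> 'a \<times> 'a) \<Rightarrow> nat \<Rightarrow> nat \<Rightarrow> nat" where
  "T_qi n m v p j i = (if is_coord (v j) (p i) then 0 else u_val n m j)"

definition l_eligible :: "nat \<Rightarrow> (nat \<Rightarrow> nat) \<Rightarrow> nat set \<Rightarrow> bool" where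
  "l_eligible l sa G = (\<forall>b. l * card {j \<in> G. sa j = b} \<le> card G)"

definition l_diverse :: "nat \<Rightarrow> (nat \<Rightarrow> nat) \<Rightarrow> nat set set \<Rightarrow> bool" where
  "l_diverse l sa P = (\<forall>G \<in> P. l_eligible l sa G)"

text \<open>Number of stars in the generalization given by partition P, QI columns 1..d:
  in a group G, attribute i is starred in all |G| tuples iff the tuples of G disagree on it.\<close>
definition num_stars :: "(nat \<Rightarrow> nat \<Rightarrow> nat) \<Rightarrow> nat \<Rightarrow> nat set set \<Rightarrow> nat" where
  "num_stars qi d P =
     (\<Sum>G\<in>P. \<Sum>i\<in>{1..d}. if (\<forall>j\<in>G. \<forall>k\<in>G. qi j i = qi k i) then 0 else card G)"

definition has_3dm :: "('a \<times> 'a \<times> 'a) set \<Rightarrow> nat \<Rightarrow> bool" where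
  "has_3dm S n = (\<exists>S' \<subseteq> S. card S' = n \<and>
     (\<forall>x\<in>S'. \<forall>y\<in>S'. x \<noteq> y \<longrightarrow>
        fst x \<noteq> fst y \<and> fst (snd x) \<noteq> fst (snd y) \<and> snd (snd x) \<noteq> snd (snd y)))"

end

theory Submission
  imports Defs
begin

text \<open>
  Row j of the table stands for the element v j, and column i vanishes exactly on the three
  rows of the coordinates of p i; every other entry of row j equals its SA value u j, and u takes
  distinct values on the three blocks of rows. A 3-eligible group has at least three rows, and if
  it agrees on column i it must be the coordinate triple of p i: a nonzero common value would give
  all its rows the same SA value. Hence every group of a 3-diverse partition agrees on at most
  one column, and on one only if it is the triple of a point of S, so the number of stars is
  3nd - 3k where k counts such triples among the groups. The count 3n(d-1) means k = n, i.e.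
  the partition consists of n pairwise disjoint coordinate triples: a 3-dimensional matching.
\<close>

lemma l_eligible_card_ge:
  assumes "finite G" "G \<noteq> {}" "l_eligible l sa G"
  shows "l \<le> card G"
proof -
  obtain j where "j \<in> G"
    using assms(2) by blast
  then have "0 < card {k \<in> G. sa k = sa j}"
    using assms(1) by (auto simp: card_gt_0_iff)
  then have "l \<le> l * card {k \<in> G. sa k = sa j}"
    by simp
  also have "\<dots> \<le> card G"
    using assms(3) by (simp add: l_eligible_def)
  finally show ?thesis .
qed

lemma not_l_eligible_if_constant:
  assumes "finite G" "G \<noteq> {}" "1 < l" "\<forall>j\<in>G. sa j = b"
  shows "\<not> l_eligible l sa G"
proof
  assume "l_eligible l sa G"
  moreover have "{j \<in> G. sa j = b} = G"
    using assms(4) by auto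
  ultimately have "l * card G \<le> 1 * card G"
    unfolding l_eligible_def by (metis mult_1)
  moreover have "0 < card G"
    using assms(1,2) by (simp add: card_gt_0_iff)
  ultimately show False
    using assms(3) by simp
qed

lemma l_eligible_if_inj_on:
  assumes "inj_on sa G" "l \<le> card G"
  shows "l_eligible l sa G"
  unfolding l_eligible_def
proof
  fix b
  have "card {j \<in> G. sa j = b} \<le> 1"
    using assms(1) by (cases "finite {j \<in> G. sa j = b}") (auto simp: card_le_Suc0_iff_eq dest: inj_onD)
  then have "l * card {j \<in> G. sa j = b} \<le> l"
    by (metis mult_le_mono2 nat_mult_1_right)
  then show "l * card {j \<in> G. sa j = b} \<le> card G"
    using assms(2) by (rule order.trans)
qed

definition qi_agrees :: "(nat \<Rightarrow> nat \<Rightarrow> nat) \<Rightarrow> nat set \<Rightarrow> nat \<Rightarrow> bool" where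
  "qi_agrees qi G i \<longleftrightarrow> (\<forall>j\<in>G. \<forall>k\<in>G. qi j i = qi k i)"

lemma num_stars_plus_agreements:
  "num_stars qi d P + (\<Sum>G\<in>P. card G * card {i \<in> {1..d}. qi_agrees qi G i}) = (\<Sum>G\<in>P. card G) * d"
proof -
  have "(\<Sum>i\<in>{1..d}. if qi_agrees qi G i then 0 else card G) + card G * card {i \<in> {1..d}. qi_agrees qi G i}
        = card G * d" for G
  proof -
    have "card G * card {i \<in> {1..d}. qi_agrees qi G i} = (\<Sum>i\<in>{1..d}. if qi_agrees qi G i then card G else 0)"
      by (simp add: sum.inter_filter[symmetric])
    then show ?thesis
      by (simp add: sum.distrib[symmetric] if_distrib[of "\<lambda>x. x + _"] cong: if_cong)
  qed
  then show ?thesis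
    unfolding num_stars_def qi_agrees_def[symmetric] by (simp add: sum.distrib[symmetric] sum_distrib_right)
qed

lemma card_Union_disjoint_const:
  assumes "disjoint Q" "finite (\<Union>Q)" "\<forall>G\<in>Q. card G = k"
  shows "card (\<Union>Q) = k * card Q"
proof -
  have "card (\<Union>Q) = (\<Sum>G\<in>Q. card G)"
    using assms(1,2) by (intro card_Union_disjoint) (auto intro: finite_subset)
  then show ?thesis
    using assms(3) by simp
qed

lemma u_val_eq_imp_same_block:
  assumes "3 \<le> m" "m \<le> 3 * n" "j \<in> {1..3*n}" "k \<in> {1..3*n}" "u_val n m j = u_val n m k"
  shows "(j \<le> n \<longleftrightarrow> k \<le> n) \<and> (j \<le> 2 * n \<longleftrightarrow> k \<le> 2 * n)"
  using assms unfolding u_val_def by (auto split: if_splits)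

lemma u_val_pos: "3 \<le> m \<Longrightarrow> 1 \<le> j \<Longrightarrow> 0 < u_val n m j"
  unfolding u_val_def by auto

definition coord_set :: "'a \<times> 'a \<times> 'a \<Rightarrow> 'a set" where
  "coord_set x = {fst x, fst (snd x), snd (snd x)}"

lemma is_coord_iff_mem_coord_set: "is_coord a x \<longleftrightarrow> a \<in> coord_set x"
  by (simp add: is_coord_def coord_set_def)

context
  fixes D1 D2 D3 :: "'a set"
  assumes disj: "D1 \<inter> D2 = {}" "D1 \<inter> D3 = {}" "D2 \<inter> D3 = {}"
begin

lemma coord_set_Int:
  assumes "x \<in> D1 \<times> D2 \<times> D3"
  shows "coord_set x \<inter> D1 = {fst x}" "coord_set x \<inter> D2 = {fst (snd x)}"
    "coord_set x \<inter> D3 = {snd (snd x)}"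
  using assms disj by (auto simp: coord_set_def)

lemma card_coord_set: "x \<in> D1 \<times> D2 \<times> D3 \<Longrightarrow> card (coord_set x) = 3"
  using disj by (auto simp: coord_set_def card_insert_if)

lemma coord_set_disjoint_iff:
  assumes "x \<in> D1 \<times> D2 \<times> D3" "y \<in> D1 \<times> D2 \<times> D3"
  shows "coord_set x \<inter> coord_set y = {} \<longleftrightarrow>
    fst x \<noteq> fst y \<and> fst (snd x) \<noteq> fst (snd y) \<and> snd (snd x) \<noteq> snd (snd y)"
  using assms disj by (auto simp: coord_set_def)

lemma inj_on_coord_set: "inj_on coord_set (D1 \<times> D2 \<times> D3)"
proof (rule inj_onI)
  fix x y assume x: "x \<in> D1 \<times> D2 \<times> D3" and y: "y \<in> D1 \<times> D2 \<times> D3"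
    and eq: "coord_set x = coord_set y"
  have "{fst x} = {fst y}" "{fst (snd x)} = {fst (snd y)}" "{snd (snd x)} = {snd (snd y)}"
    using coord_set_Int[OF x] coord_set_Int[OF y] eq by simp_all
  then show "x = y"
    by (simp add: prod_eq_iff)
qed

end

lemma partition_on_mem_eq:
  assumes "partition_on A P" "G \<in> P" "G' \<in> P" "j \<in> G" "j \<in> G'"
  shows "G = G'"
  using assms disjointD[OF partition_onD2[OF assms(1)] assms(2,3)] by blast

lemma image_restrict_preimage:
  assumes "X \<subseteq> f ` A"
  shows "f ` {a \<in> A. f a \<in> X} = X"
  using assms by blast

locale three_dm_table =
  fixes D1 D2 D3 :: "'a set" and S :: "('a \<times> 'a \<times> 'a) set"
    and n d m :: nat and v :: "nat \<Rightarrow> 'a" and p :: "nat \<Rightarrow> 'a \<times> 'a \<times> 'a"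
  assumes disj: "D1 \<inter> D2 = {}" "D1 \<inter> D3 = {}" "D2 \<inter> D3 = {}"
    and S_sub: "S \<subseteq> D1 \<times> D2 \<times> D3"
    and p_bij: "bij_betw p {1..d} S" and d_ge: "d \<ge> n"
    and m_ge: "3 \<le> m" and m_le: "m \<le> 3 * n"
    and v_bij: "bij_betw v {1..n} D1" "bij_betw v {n+1..2*n} D2" "bij_betw v {2*n+1..3*n} D3"
begin

definition coord_rows :: "'a \<times> 'a \<times> 'a \<Rightarrow> nat set" where
  "coord_rows x = {j \<in> {1..3*n}. v j \<in> coord_set x}"

lemma v_bij_rows: "bij_betw v {1..3*n} (D1 \<union> D2 \<union> D3)"
proof -
  have "bij_betw v ({1..n} \<union> {n+1..2*n} \<union> {2*n+1..3*n}) (D1 \<union> D2 \<union> D3)"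
    using disj by (intro bij_betw_combine v_bij) auto
  moreover have "{1..n} \<union> {n+1..2*n} \<union> {2*n+1..3*n} = {1..3*n}"
    by auto
  ultimately show ?thesis
    by simp
qed

lemma v_mem_blocks:
  assumes "j \<in> {1..3*n}"
  shows "j \<le> n \<Longrightarrow> v j \<in> D1" "n < j \<Longrightarrow> j \<le> 2 * n \<Longrightarrow> v j \<in> D2" "2 * n < j \<Longrightarrow> v j \<in> D3"
  using assms v_bij by (auto simp: bij_betw_def)

lemma coord_set_subset_image:
  "x \<in> D1 \<times> D2 \<times> D3 \<Longrightarrow> coord_set x \<subseteq> v ` {1..3*n}"
  using v_bij_rows by (auto simp: coord_set_def bij_betw_def)

lemma image_coord_rows:
  "x \<in> D1 \<times> D2 \<times> D3 \<Longrightarrow> v ` coord_rows x = coord_set x"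
  unfolding coord_rows_def by (intro image_restrict_preimage coord_set_subset_image)

lemma card_coord_rows:
  assumes "x \<in> D1 \<times> D2 \<times> D3"
  shows "card (coord_rows x) = 3"
proof -
  have "inj_on v (coord_rows x)"
    using v_bij_rows by (auto simp: bij_betw_def coord_rows_def intro: inj_on_subset)
  then show ?thesis
    using card_image image_coord_rows[OF assms] card_coord_set[OF disj assms] by metis
qed

lemma coord_rows_disjoint_iff:
  assumes "x \<in> D1 \<times> D2 \<times> D3" "y \<in> D1 \<times> D2 \<times> D3"
  shows "coord_rows x \<inter> coord_rows y = {} \<longleftrightarrow>
    fst x \<noteq> fst y \<and> fst (snd x) \<noteq> fst (snd y) \<and> snd (snd x) \<noteq> snd (snd y)"
proof -
  have "coord_rows x \<inter> coord_rows y = {j \<in> {1..3*n}. v j \<in> coord_set x \<inter> coord_set y}"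
    unfolding coord_rows_def by blast
  then have image: "v ` (coord_rows x \<inter> coord_rows y) = coord_set x \<inter> coord_set y"
    using coord_set_subset_image[OF assms(1)] image_restrict_preimage[of "coord_set x \<inter> coord_set y" v]
    by auto
  have "coord_rows x \<inter> coord_rows y = {} \<longleftrightarrow> v ` (coord_rows x \<inter> coord_rows y) = {}"
    by (rule image_is_empty[symmetric])
  also have "\<dots> \<longleftrightarrow> coord_set x \<inter> coord_set y = {}"
    by (simp only: image)
  also have "\<dots> \<longleftrightarrow> fst x \<noteq> fst y \<and> fst (snd x) \<noteq> fst (snd y) \<and> snd (snd x) \<noteq> snd (snd y)"
    by (rule coord_set_disjoint_iff[OF disj assms])
  finally show ?thesis .
qed

lemma inj_on_coord_rows: "inj_on coord_rows (D1 \<times> D2 \<times> D3)"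
proof (rule inj_onI)
  fix x y assume xy: "x \<in> D1 \<times> D2 \<times> D3" "y \<in> D1 \<times> D2 \<times> D3" "coord_rows x = coord_rows y"
  then have "coord_set x = coord_set y"
    using image_coord_rows by metis
  then show "x = y"
    using inj_on_coord_set[OF disj] xy(1,2) by (simp add: inj_on_eq_iff)
qed

lemma coord_rows_eligible:
  assumes x: "x \<in> D1 \<times> D2 \<times> D3"
  shows "l_eligible 3 (u_val n m) (coord_rows x)"
proof (rule l_eligible_if_inj_on)
  show "inj_on (u_val n m) (coord_rows x)"
  proof (rule inj_onI)
    fix j k assume jk: "j \<in> coord_rows x" "k \<in> coord_rows x" "u_val n m j = u_val n m k"
    then have rows: "j \<in> {1..3*n}" "k \<in> {1..3*n}" and coords: "v j \<in> coord_set x" "v k \<in> coord_set x"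
      by (auto simp: coord_rows_def)
    have "v j = v k"
      using u_val_eq_imp_same_block[OF m_ge m_le rows jk(3)] coords coord_set_Int[OF disj x]
        v_mem_blocks[OF rows(1)] v_mem_blocks[OF rows(2)]
      by (metis IntI linorder_not_le singletonD)
    then show "j = k"
      using v_bij_rows rows by (auto simp: bij_betw_def inj_on_eq_iff)
  qed
  show "3 \<le> card (coord_rows x)"
    using card_coord_rows[OF x] by simp
qed

lemma p_mem_product: "i \<in> {1..d} \<Longrightarrow> p i \<in> D1 \<times> D2 \<times> D3"
  using p_bij S_sub by (auto simp: bij_betw_def)

lemma qi_agrees_iff_eq_coord_rows:
  assumes G: "G \<subseteq> {1..3*n}" "G \<noteq> {}" "l_eligible 3 (u_val n m) G" and i: "i \<in> {1..d}"
  shows "qi_agrees (T_qi n m v p) G i \<longleftrightarrow> G = coord_rows (p i)"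
proof
  assume agrees: "qi_agrees (T_qi n m v p) G i"
  have fin: "finite G"
    using G(1) finite_subset by blast
  have "G \<subseteq> coord_rows (p i)"
  proof
    fix j assume j: "j \<in> G"
    show "j \<in> coord_rows (p i)"
    proof (rule ccontr)
      assume "j \<notin> coord_rows (p i)"
      then have "T_qi n m v p j i = u_val n m j" "u_val n m j \<noteq> 0"
        using j G(1) u_val_pos[OF m_ge]
        by (auto simp: T_qi_def coord_rows_def is_coord_iff_mem_coord_set)
      \<comment> \<open>a nonzero entry in column i forces every row of G to carry the same SA value u_j\<close>
      then have "\<forall>k\<in>G. u_val n m k = u_val n m j"
        using agrees j unfolding qi_agrees_def T_qi_def by (metis (full_types))
      then show False
        using not_l_eligible_if_constant[OF fin G(2), of 3 "u_val n m" "u_val n m j"] G(3) by simp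
    qed
  qed
  moreover have "card (coord_rows (p i)) \<le> card G"
    using l_eligible_card_ge[OF fin G(2,3)] card_coord_rows[OF p_mem_product[OF i]] by simp
  ultimately show "G = coord_rows (p i)"
    by (intro card_seteq) (auto simp: coord_rows_def)
next
  assume "G = coord_rows (p i)"
  then show "qi_agrees (T_qi n m v p) G i"
    by (simp add: qi_agrees_def T_qi_def coord_rows_def is_coord_iff_mem_coord_set)
qed

lemma card_attributes_eq_coord_rows:
  "card {i \<in> {1..d}. G = coord_rows (p i)} = (if G \<in> coord_rows ` S then 1 else 0)"
proof (cases "G \<in> coord_rows ` S")
  case True
  then obtain i0 where i0: "i0 \<in> {1..d}" "G = coord_rows (p i0)"
    using p_bij by (auto simp: bij_betw_def)
  have "{i \<in> {1..d}. G = coord_rows (p i)} = {i0}"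
    using i0 p_mem_product p_bij inj_on_coord_rows
    by (auto simp: bij_betw_def inj_on_eq_iff)
  then show ?thesis
    using True by simp
next
  case False
  then have "{i \<in> {1..d}. G = coord_rows (p i)} = {}"
    using p_bij by (auto simp: bij_betw_def)
  then show ?thesis
    using False by simp
qed

lemma num_stars_diverse_partition:
  assumes P: "partition_on {1..3*n} P" and div: "l_diverse 3 (u_val n m) P"
  shows "num_stars (T_qi n m v p) d P + 3 * card (P \<inter> coord_rows ` S) = 3 * n * d"
proof -
  have finP: "finite P"
    using finite_elements[OF _ P] by simp
  have "card G * card {i \<in> {1..d}. qi_agrees (T_qi n m v p) G i} = (if G \<in> coord_rows ` S then 3 else 0)"
    if G: "G \<in> P" for G
  proof -
    have "G \<subseteq> {1..3*n}" "G \<noteq> {}" "l_eligible 3 (u_val n m) G"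
      using G P div by (auto simp: partition_on_def l_diverse_def)
    then have "{i \<in> {1..d}. qi_agrees (T_qi n m v p) G i} = {i \<in> {1..d}. G = coord_rows (p i)}"
      using qi_agrees_iff_eq_coord_rows by blast
    moreover have "card G = 3" if "G \<in> coord_rows ` S"
      using that card_coord_rows S_sub by auto
    ultimately show ?thesis
      using card_attributes_eq_coord_rows[of G] by simp
  qed
  then have "(\<Sum>G\<in>P. card G * card {i \<in> {1..d}. qi_agrees (T_qi n m v p) G i})
      = (\<Sum>G\<in>P. if G \<in> coord_rows ` S then 3 else 0)"
    by (rule sum.cong[OF refl])
  also have "\<dots> = 3 * card (P \<inter> coord_rows ` S)"
    using finP by (simp add: sum.If_cases)
  moreover have "(\<Sum>G\<in>P. card G) = 3 * n"
    using card_Union_disjoint[OF partition_onD2[OF P]] partition_onD1[OF P]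
    by (metis Union_upper card_atLeastAtMost diff_Suc_1 finite_atLeastAtMost finite_subset)
  ultimately show ?thesis
    using num_stars_plus_agreements[of "T_qi n m v p" d P] by simp
qed

lemma card_Union_coord_rows:
  assumes "Q \<subseteq> coord_rows ` S" "disjoint Q"
  shows "card (\<Union>Q) = 3 * card Q"
proof (rule card_Union_disjoint_const[OF assms(2)])
  have "\<Union>Q \<subseteq> {1..3*n}"
    using assms(1) unfolding coord_rows_def by blast
  then show "finite (\<Union>Q)"
    by (rule finite_subset) simp
  show "\<forall>G\<in>Q. card G = 3"
  proof
    fix G assume "G \<in> Q"
    then obtain x where "x \<in> S" "G = coord_rows x"
      using assms(1) by blast
    then show "card G = 3"
      using card_coord_rows S_sub by blast
  qed
qed

lemma card_partition_Int_coord_rows_eq_iff: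
  assumes P: "partition_on {1..3*n} P"
  shows "card (P \<inter> coord_rows ` S) = n \<longleftrightarrow> P \<subseteq> coord_rows ` S"
proof -
  let ?Q = "P \<inter> coord_rows ` S"
  have rows: "\<Union>P = {1..3*n}"
    using partition_onD1[OF P] by (rule sym)
  have "disjoint ?Q"
    using partition_onD2[OF P] by (rule pairwise_subset) blast
  then have card_Q: "card (\<Union>?Q) = 3 * card ?Q"
    by (intro card_Union_coord_rows) blast
  show ?thesis
  proof
    assume "card ?Q = n"
    moreover have "\<Union>?Q \<subseteq> {1..3*n}"
      unfolding rows[symmetric] by blast
    \<comment> \<open>so the groups of Q already cover all 3n rows, leaving no room for other groups\<close>
    ultimately have cover: "\<Union>?Q = {1..3*n}"
      using card_Q card_subset_eq[of "{1..3*n}" "\<Union>?Q"] by simp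
    show "P \<subseteq> coord_rows ` S"
    proof
      fix G assume G: "G \<in> P"
      then have "G \<noteq> {}"
        using partition_onD3[OF P] by blast
      then obtain j where j: "j \<in> G"
        by blast
      then have "j \<in> \<Union>?Q"
        unfolding cover rows[symmetric] using G by blast
      then obtain G' where G': "G' \<in> ?Q" "j \<in> G'"
        by blast
      then have "G = G'"
        using partition_on_mem_eq[OF P G _ j] by blast
      then show "G \<in> coord_rows ` S"
        using G' by blast
    qed
  next
    assume "P \<subseteq> coord_rows ` S"
    then show "card ?Q = n"
      using card_Q rows by (simp add: Int_absorb2)
  qed
qed

lemma partition_on_coord_rows_of_matching:
  assumes S': "S' \<subseteq> S" "card S' = n"
    and M: "\<forall>x\<in>S'. \<forall>y\<in>S'. x \<noteq> y \<longrightarrow>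
      fst x \<noteq> fst y \<and> fst (snd x) \<noteq> fst (snd y) \<and> snd (snd x) \<noteq> snd (snd y)"
  shows "partition_on {1..3*n} (coord_rows ` S')"
proof -
  have S'_sub: "S' \<subseteq> D1 \<times> D2 \<times> D3"
    using S'(1) S_sub by blast
  have disjoint: "disjoint (coord_rows ` S')"
  proof (rule disjointI)
    fix G G' assume "G \<in> coord_rows ` S'" "G' \<in> coord_rows ` S'" "G \<noteq> G'"
    then obtain x y where "x \<in> S'" "y \<in> S'" "x \<noteq> y" "G = coord_rows x" "G' = coord_rows y"
      by blast
    then show "G \<inter> G' = {}"
      using M coord_rows_disjoint_iff S'_sub by blast
  qed
  have "card (\<Union>(coord_rows ` S')) = 3 * card (coord_rows ` S')"
    using S'(1) disjoint by (intro card_Union_coord_rows) blast+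
  also have "\<dots> = 3 * n"
    using card_image[OF inj_on_subset[OF inj_on_coord_rows S'_sub]] S'(2) by simp
  finally have "card (\<Union>(coord_rows ` S')) = card {1..3*n}"
    by simp
  moreover have "\<Union>(coord_rows ` S') \<subseteq> {1..3*n}"
    unfolding coord_rows_def by blast
  ultimately have "\<Union>(coord_rows ` S') = {1..3*n}"
    using card_subset_eq[of "{1..3*n}"] by simp
  moreover have "{} \<notin> coord_rows ` S'"
  proof
    assume "{} \<in> coord_rows ` S'"
    then obtain x where "x \<in> S'" "coord_rows x = {}"
      by blast
    then show False
      using card_coord_rows S'_sub by fastforce
  qed
  ultimately show ?thesis
    using disjoint by (simp add: partition_on_def)
qed

lemma has_3dm_if_partition_on_coord_rows:
  assumes P: "P \<subseteq> coord_rows ` S" "partition_on {1..3*n} P"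
  shows "has_3dm S n"
proof -
  define S' where "S' = {x \<in> S. coord_rows x \<in> P}"
  have S'_sub: "S' \<subseteq> D1 \<times> D2 \<times> D3"
    using S_sub unfolding S'_def by blast
  have "coord_rows ` S' = P"
    using P(1) unfolding S'_def by blast
  then have "card S' = card P"
    using card_image[OF inj_on_subset[OF inj_on_coord_rows S'_sub]] by simp
  also have "\<dots> = n"
    using card_partition_Int_coord_rows_eq_iff[OF P(2)] P(1) by (simp add: Int_absorb2)
  finally have "card S' = n" .
  moreover have "fst x \<noteq> fst y \<and> fst (snd x) \<noteq> fst (snd y) \<and> snd (snd x) \<noteq> snd (snd y)"
    if xy: "x \<in> S'" "y \<in> S'" "x \<noteq> y" for x y
  proof -
    have "coord_rows x \<noteq> coord_rows y"
      using xy S'_sub inj_onD[OF inj_on_coord_rows] by blast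
    moreover have "coord_rows x \<in> P" "coord_rows y \<in> P"
      using xy unfolding S'_def by blast+
    ultimately have "coord_rows x \<inter> coord_rows y = {}"
      using disjointD[OF partition_onD2[OF P(2)]] by blast
    then show ?thesis
      using xy S'_sub coord_rows_disjoint_iff by blast
  qed
  moreover have "S' \<subseteq> S"
    unfolding S'_def by blast
  ultimately show ?thesis
    unfolding has_3dm_def by blast
qed

lemma has_3dm_iff_partition_on_coord_rows:
  "has_3dm S n \<longleftrightarrow> (\<exists>P \<subseteq> coord_rows ` S. partition_on {1..3*n} P)"
proof
  assume "has_3dm S n"
  then obtain S' where S': "S' \<subseteq> S" "card S' = n" "\<forall>x\<in>S'. \<forall>y\<in>S'. x \<noteq> y \<longrightarrow>
      fst x \<noteq> fst y \<and> fst (snd x) \<noteq> fst (snd y) \<and> snd (snd x) \<noteq> snd (snd y)"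
    unfolding has_3dm_def by blast
  then have "partition_on {1..3*n} (coord_rows ` S')"
    by (rule partition_on_coord_rows_of_matching)
  moreover have "coord_rows ` S' \<subseteq> coord_rows ` S"
    using S'(1) by (rule image_mono)
  ultimately show "\<exists>P \<subseteq> coord_rows ` S. partition_on {1..3*n} P"
    by blast
next
  assume "\<exists>P \<subseteq> coord_rows ` S. partition_on {1..3*n} P"
  then obtain P where "P \<subseteq> coord_rows ` S" "partition_on {1..3*n} P"
    by blast
  then show "has_3dm S n"
    by (rule has_3dm_if_partition_on_coord_rows)
qed

lemma diverse_partition_stars_iff:
  assumes P: "partition_on {1..3*n} P"
  shows "l_diverse 3 (u_val n m) P \<and> num_stars (T_qi n m v p) d P = 3 * n * (d - 1)
    \<longleftrightarrow> P \<subseteq> coord_rows ` S"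
proof -
  have d: "3 * n * d = 3 * n * (d - 1) + 3 * n"
    using d_ge m_ge m_le by (cases d) auto
  have "l_diverse 3 (u_val n m) P" if sub: "P \<subseteq> coord_rows ` S"
    unfolding l_diverse_def
  proof
    fix G assume "G \<in> P"
    then obtain x where "x \<in> S" "G = coord_rows x"
      using sub by blast
    then show "l_eligible 3 (u_val n m) G"
      using coord_rows_eligible S_sub by blast
  qed
  then show ?thesis
    using num_stars_diverse_partition[OF P] card_partition_Int_coord_rows_eq_iff[OF P] d
    by auto
qed

theorem has_3dm_iff_diverse_generalization:
  "has_3dm S n \<longleftrightarrow>
    (\<exists>P. partition_on {1..3*n} P \<and> l_diverse 3 (u_val n m) P \<and>
         num_stars (T_qi n m v p) d P = 3 * n * (d - 1))"
  using has_3dm_iff_partition_on_coord_rows diverse_partition_stars_iff by blast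

end

theorem lemma3:
  fixes D1 D2 D3 :: "'a set" and S :: "('a \<times> 'a \<times> 'a) set"
    and n d m :: nat and v :: "nat \<Rightarrow> 'a" and p :: "nat \<Rightarrow> 'a \<times> 'a \<times> 'a"
  assumes "finite D1" "finite D2" "finite D3"
    and "D1 \<inter> D2 = {}" "D1 \<inter> D3 = {}" "D2 \<inter> D3 = {}"
    and "card D1 = n" "card D2 = n" "card D3 = n"
    and "S \<subseteq> D1 \<times> D2 \<times> D3"
    and "bij_betw p {1..d} S" and "d \<ge> n"
    and "3 \<le> m" "m \<le> 3 * n"
    and "bij_betw v {1..n} D1" "bij_betw v {n+1..2*n} D2" "bij_betw v {2*n+1..3*n} D3"
  shows "has_3dm S n \<longleftrightarrow>
    (\<exists>P. partition_on {1..3*n} P \<and> l_diverse 3 (u_val n m) P \<and>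
         num_stars (T_qi n m v p) d P = 3 * n * (d - 1))"
proof -
  \<comment> \<open>finiteness and cardinality of D1, D2, D3 already follow from the bijections v\<close>
  interpret three_dm_table D1 D2 D3 S n d m v p
    using assms by unfold_locales
  show ?thesis
    by (rule has_3dm_iff_diverse_generalization)
qed

end
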